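(* There exists an absolute constant $C$ such that the following holds. Let $G$ be a graph on $n$ vertices, let $0<\delta\le 1/2$, and let $s,m,b$ be positive integers with $m\le b\le \delta s$. Let $\mathcal{S}^+(s,m,b)$ be the collection of all ordered pairs $(S,F)$ where $S\in\mathcal{S}(s,m,b)$ and $F$ is a set of $m-1$ unordered pairs of vertices of $S$ such that adding the pairs in $F$ as edges to $G[S]$ yields a connected graph. Then $$|\mathcal{S}^+(s,m,b)|\le n^m\exp\big(C\delta\log(1/\delta)\,s\big).$$
   Context: $\mathcal{S}(s,m,b)$ is the collection of all sets $S\subseteq V(G)$ with $|S|=s$ such that $G[S]$ has exactly $m$ connected components $S_1,\dots,S_m$ and $\sum_{i=1}^m|N_G(S_i)|=b$, where $N_G(A)$ is the set of vertices in $V(G)\setminus A$ having a neighbor in $A$ and $G[S]$ is the induced subgraph. *)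

theory Defs
  imports Complex_Main
begin

definition simple_graph :: "nat set \<Rightarrow> (nat \<Rightarrow> nat \<Rightarrow> bool) \<Rightarrow> bool" where
  "simple_graph V E \<longleftrightarrow> finite V \<and> (\<forall>u v. E u v \<longrightarrow> u \<in> V \<and> v \<in> V)
     \<and> (\<forall>u v. E u v \<longrightarrow> E v u) \<and> (\<forall>u. \<not> E u u)"

definition nbhd :: "nat set \<Rightarrow> (nat \<Rightarrow> nat \<Rightarrow> bool) \<Rightarrow> nat set \<Rightarrow> nat set" where
  "nbhd V E A = {v \<in> V - A. \<exists>u\<in>A. E u v}"

definition reach_in :: "(nat \<Rightarrow> nat \<Rightarrow> bool) \<Rightarrow> nat set \<Rightarrow> nat \<Rightarrow> nat \<Rightarrow> bool" where
  "reach_in E S = (\<lambda>u v. u \<in> S \<and> v \<in> S \<and> E u v)\<^sup>*\<^sup>*"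

definition components_in :: "(nat \<Rightarrow> nat \<Rightarrow> bool) \<Rightarrow> nat set \<Rightarrow> nat set set" where
  "components_in E S = (\<lambda>u. {v \<in> S. reach_in E S u v}) ` S"

definition Sfam :: "nat set \<Rightarrow> (nat \<Rightarrow> nat \<Rightarrow> bool) \<Rightarrow> nat \<Rightarrow> nat \<Rightarrow> nat \<Rightarrow> nat set set" where
  "Sfam V E s m b = {S. S \<subseteq> V \<and> card S = s \<and> card (components_in E S) = m
       \<and> (\<Sum>C\<in>components_in E S. card (nbhd V E C)) = b}"

definition pairs_of :: "nat set \<Rightarrow> nat set set" where
  "pairs_of S = {{u, v} | u v. u \<in> S \<and> v \<in> S \<and> u \<noteq> v}"

definition connected_with :: "(nat \<Rightarrow> nat \<Rightarrow> bool) \<Rightarrow> nat set \<Rightarrow> nat set set \<Rightarrow> bool" where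
  "connected_with E S F \<longleftrightarrow> S \<noteq> {} \<and>
     (\<forall>u\<in>S. \<forall>v\<in>S. reach_in (\<lambda>x y. E x y \<or> {x, y} \<in> F) S u v)"

definition Splus :: "nat set \<Rightarrow> (nat \<Rightarrow> nat \<Rightarrow> bool) \<Rightarrow> nat \<Rightarrow> nat \<Rightarrow> nat \<Rightarrow> (nat set \<times> nat set set) set" where
  "Splus V E s m b = {(S, F). S \<in> Sfam V E s m b \<and> F \<subseteq> pairs_of S \<and> card F = m - 1
       \<and> connected_with E S F}"

end

theory Submission
  imports Defs
begin

text \<open>
  A set \<open>S \<in> Sfam V E s m b\<close> is recovered from its \<open>m\<close> component minima together with
  any \<open>R\<close> with \<open>S \<subseteq> R\<close> and \<open>R\<close> disjoint from the boundary \<open>\<partial>S\<close> (the union of the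
  neighbourhoods of the components): \<open>S\<close> is what is reachable from the minima in \<open>G[R]\<close>.
  Hence, for fixed minima, the cylinders \<open>{R. S \<subseteq> R, R \<inter> \<partial>S = {}}\<close> are pairwise
  disjoint, and summing the product measure with parameter \<open>1 - \<delta>\<close> over them gives
  \<open>\<Sum> (1 - \<delta>)^|S| \<delta>^|\<partial>S| \<le> 1\<close>. As \<open>|\<partial>S| \<le> b\<close>, there are at most
  \<open>(n choose m) (1 - \<delta>)^-s \<delta>^-b\<close> such sets, and at most \<open>(s\<^sup>2 choose (m - 1))\<close> choices
  of \<open>F\<close> for each. Elementary estimates, using \<open>m \<le> b \<le> \<delta> s\<close>, turn this into the
  bound with \<open>C = 11\<close>.
\<close>

definition component_roots :: "(nat \<Rightarrow> nat \<Rightarrow> bool) \<Rightarrow> nat set \<Rightarrow> nat set" where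
  "component_roots E S = Min ` components_in E S"

definition boundary :: "nat set \<Rightarrow> (nat \<Rightarrow> nat \<Rightarrow> bool) \<Rightarrow> nat set \<Rightarrow> nat set" where
  "boundary V E S = (\<Union>C\<in>components_in E S. nbhd V E C)"

lemma reach_in_sym:
  assumes "simple_graph V E" "reach_in E S u v"
  shows "reach_in E S v u"
proof -
  have "symp (\<lambda>u v. u \<in> S \<and> v \<in> S \<and> E u v)"
    using assms(1) unfolding simple_graph_def symp_def by blast
  hence "symp (reach_in E S)" unfolding reach_in_def by (rule symp_rtranclp)
  thus ?thesis using assms(2) by (meson sympD)
qed

lemma reach_in_trans: "reach_in E S u v \<Longrightarrow> reach_in E S v w \<Longrightarrow> reach_in E S u w"
  unfolding reach_in_def by auto

lemma reach_in_mono: "S \<subseteq> R \<Longrightarrow> reach_in E S u v \<Longrightarrow> reach_in E R u v"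
  unfolding reach_in_def by (erule rtranclp_mono[THEN predicate2D, rotated]) auto

lemma components_in_subset: "C \<in> components_in E S \<Longrightarrow> C \<subseteq> S"
  unfolding components_in_def by auto

lemma components_in_nonempty: "C \<in> components_in E S \<Longrightarrow> C \<noteq> {}"
  unfolding components_in_def reach_in_def by auto

lemma finite_components_in: "finite S \<Longrightarrow> finite (components_in E S)"
  unfolding components_in_def by simp

lemma reach_class_in_components_in:
  "x \<in> S \<Longrightarrow> {v\<in>S. reach_in E S x v} \<in> components_in E S"
  unfolding components_in_def by auto

lemma components_in_eq_reach_class:
  assumes "simple_graph V E" "C \<in> components_in E S" "x \<in> C"
  shows "C = {v\<in>S. reach_in E S x v}"
proof -
  obtain u where u: "C = {v\<in>S. reach_in E S u v}"
    using assms(2) unfolding components_in_def by auto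
  hence "reach_in E S u x" using assms(3) by auto
  thus ?thesis using u reach_in_sym[OF assms(1)] reach_in_trans by blast
qed

lemma Min_in_components_in:
  assumes "finite S" "C \<in> components_in E S"
  shows "Min C \<in> C"
  using components_in_subset[OF assms(2)] components_in_nonempty[OF assms(2)] assms(1)
  by (simp add: finite_subset)

lemma components_in_eq_reach_Min:
  assumes "simple_graph V E" "finite S" "C \<in> components_in E S"
  shows "C = {v\<in>S. reach_in E S (Min C) v}"
  using components_in_eq_reach_class[OF assms(1,3) Min_in_components_in[OF assms(2,3)]] .

lemma card_component_roots:
  assumes "simple_graph V E" "finite S"
  shows "card (component_roots E S) = card (components_in E S)"
  unfolding component_roots_def
  by (rule card_image, rule inj_onI) (metis assms components_in_eq_reach_Min)

lemma component_roots_subset: "finite S \<Longrightarrow> component_roots E S \<subseteq> S"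
  unfolding component_roots_def using Min_in_components_in components_in_subset by blast

lemma boundary_subset: "boundary V E S \<subseteq> V"
  unfolding boundary_def nbhd_def by auto

lemma card_boundary_le:
  "finite S \<Longrightarrow> card (boundary V E S) \<le> (\<Sum>C\<in>components_in E S. card (nbhd V E C))"
  unfolding boundary_def by (rule card_UN_le) (rule finite_components_in)

lemma boundary_disjoint:
  assumes "simple_graph V E"
  shows "S \<inter> boundary V E S = {}"
proof (rule ccontr)
  assume "S \<inter> boundary V E S \<noteq> {}"
  then obtain z C u where "z \<in> S" "C \<in> components_in E S" "u \<in> C" "E u z" "z \<notin> C"
    unfolding boundary_def nbhd_def by auto
  moreover from this have "reach_in E S u z"
    using components_in_subset unfolding reach_in_def by blast
  ultimately show False using components_in_eq_reach_class[OF assms] by blast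
qed

text \<open>Walks in \<open>G[R]\<close> starting at a root cannot leave its component without crossing the boundary.\<close>

lemma reach_from_component_roots:
  assumes G: "simple_graph V E" and "finite S" "S \<subseteq> R" "R \<inter> boundary V E S = {}"
  shows "S = {x. \<exists>w\<in>component_roots E S. reach_in E R w x}"
proof (intro equalityI subsetI CollectI)
  fix x assume x: "x \<in> S"
  define C where "C = {v\<in>S. reach_in E S x v}"
  have C: "C \<in> components_in E S" "x \<in> C"
    using reach_class_in_components_in[OF x] x unfolding C_def reach_in_def by auto
  hence "reach_in E S (Min C) x" using components_in_eq_reach_Min[OF G assms(2)] by blast
  moreover have "Min C \<in> component_roots E S" unfolding component_roots_def using C(1) by auto
  ultimately show "\<exists>w\<in>component_roots E S. reach_in E R w x" using reach_in_mono[OF assms(3)] by blast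
next
  fix x assume "x \<in> {x. \<exists>w\<in>component_roots E S. reach_in E R w x}"
  then obtain C where C: "C \<in> components_in E S" and r: "reach_in E R (Min C) x"
    unfolding component_roots_def by auto
  from r have "x \<in> C"
    unfolding reach_in_def
  proof (induction rule: rtranclp_induct)
    case base thus ?case using Min_in_components_in[OF assms(2) C] .
  next
    case (step y z)
    have "z \<in> V" using step(2) G unfolding simple_graph_def by blast
    hence "z \<notin> C \<Longrightarrow> z \<in> boundary V E S"
      unfolding boundary_def nbhd_def using step C by auto
    thus ?case using step(2) assms(4) by auto
  qed
  thus "x \<in> S" using components_in_subset[OF C] by auto
qed

subsection \<open>A Kraft-type inequality for disjoint cylinders\<close>

lemma sum_Pow_power_card:
  fixes p q :: "'b :: comm_semiring_1"
  assumes "finite X"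
  shows "(\<Sum>R\<in>Pow X. p ^ card R * q ^ card (X - R)) = (p + q) ^ card X"
  using prod_add[OF assms, of "\<lambda>_. p" "\<lambda>_. q"] by simp

lemma sum_cylinder:
  fixes p q :: "'b :: comm_semiring_1"
  assumes "finite V" "A \<subseteq> V" "B \<subseteq> V" "A \<inter> B = {}"
  shows "(\<Sum>R | R \<subseteq> V \<and> A \<subseteq> R \<and> R \<inter> B = {}. p ^ card R * q ^ card (V - R))
     = p ^ card A * q ^ card B * (p + q) ^ card (V - A - B)"
proof -
  let ?X = "V - A - B"
  have fin: "finite A" "finite B" "finite ?X" using assms finite_subset by auto
  have cyl: "{R. R \<subseteq> V \<and> A \<subseteq> R \<and> R \<inter> B = {}} = (\<lambda>R'. A \<union> R') ` Pow ?X"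
  proof (intro equalityI subsetI)
    fix R assume "R \<in> {R. R \<subseteq> V \<and> A \<subseteq> R \<and> R \<inter> B = {}}"
    hence "R = A \<union> (R - A)" "R - A \<in> Pow ?X" by auto
    thus "R \<in> (\<lambda>R'. A \<union> R') ` Pow ?X" by blast
  qed (use assms in auto)
  have inj: "inj_on (\<lambda>R'. A \<union> R') (Pow ?X)" by (auto simp: inj_on_def)
  have "(\<Sum>R | R \<subseteq> V \<and> A \<subseteq> R \<and> R \<inter> B = {}. p ^ card R * q ^ card (V - R))
      = (\<Sum>R'\<in>Pow ?X. p ^ card (A \<union> R') * q ^ card (V - (A \<union> R')))"
    unfolding cyl by (rule sum.reindex[OF inj, unfolded comp_def])
  also have "\<dots> = (\<Sum>R'\<in>Pow ?X. p ^ card A * q ^ card B * (p ^ card R' * q ^ card (?X - R')))"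
  proof (rule sum.cong[OF refl])
    fix R' assume R': "R' \<in> Pow ?X"
    have "finite R'" using R' fin(3) finite_subset by blast
    hence "card (A \<union> R') = card A + card R'" "card (B \<union> (?X - R')) = card B + card (?X - R')"
      using R' fin by (auto intro: card_Un_disjoint)
    moreover have "V - (A \<union> R') = B \<union> (?X - R')" using R' assms by auto
    ultimately show "p ^ card (A \<union> R') * q ^ card (V - (A \<union> R'))
        = p ^ card A * q ^ card B * (p ^ card R' * q ^ card (?X - R'))"
      by (simp add: power_add algebra_simps)
  qed
  also have "\<dots> = p ^ card A * q ^ card B * (p + q) ^ card ?X"
    by (simp add: sum_distrib_left[symmetric] sum_Pow_power_card[OF fin(3)])
  finally show ?thesis .
qed

lemma sum_disjoint_cylinders_le_1:
  fixes p q :: real and A B :: "'i \<Rightarrow> 'a set"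
  assumes "finite V" "finite I" "0 \<le> p" "0 \<le> q" "p + q = 1"
    and sub: "\<And>i. i \<in> I \<Longrightarrow> A i \<subseteq> V \<and> B i \<subseteq> V \<and> A i \<inter> B i = {}"
    and disj: "\<And>i j R. i \<in> I \<Longrightarrow> j \<in> I \<Longrightarrow> A i \<subseteq> R \<Longrightarrow> R \<inter> B i = {} \<Longrightarrow>
                 A j \<subseteq> R \<Longrightarrow> R \<inter> B j = {} \<Longrightarrow> i = j"
  shows "(\<Sum>i\<in>I. p ^ card (A i) * q ^ card (B i)) \<le> 1"
proof -
  define cyl where "cyl i = {R. R \<subseteq> V \<and> A i \<subseteq> R \<and> R \<inter> B i = {}}" for i
  define \<mu> where "\<mu> R = p ^ card R * q ^ card (V - R)" for R
  have "(\<Sum>i\<in>I. p ^ card (A i) * q ^ card (B i)) = (\<Sum>i\<in>I. sum \<mu> (cyl i))"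
  proof (rule sum.cong[OF refl])
    fix i assume "i \<in> I"
    thus "p ^ card (A i) * q ^ card (B i) = sum \<mu> (cyl i)"
      using sum_cylinder[OF assms(1), of "A i" "B i" p q] sub assms(5) by (simp add: \<mu>_def cyl_def)
  qed
  also have "\<dots> = sum \<mu> (\<Union>(cyl ` I))"
    by (rule sum.UNION_disjoint[symmetric]) (use assms(1,2) disj in \<open>auto simp: cyl_def\<close>)
  also have "\<dots> \<le> sum \<mu> (Pow V)"
    by (rule sum_mono2) (use assms(1,3,4) in \<open>auto simp: cyl_def \<mu>_def\<close>)
  also have "\<dots> = 1" unfolding \<mu>_def using sum_Pow_power_card[OF assms(1), of p q] assms(5) by simp
  finally show ?thesis .
qed

lemma card_Sfam_weighted_le:
  fixes p q :: real
  assumes G: "simple_graph V E" and "0 < p" "0 < q" "p + q = 1"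
  shows "real (card (Sfam V E s m b)) * (p ^ s * q ^ b) \<le> real (card V choose m)"
proof -
  have finV: "finite V" using G unfolding simple_graph_def by blast
  have finS: "finite S" if "S \<in> Sfam V E s m b" for S
    using that finV finite_subset unfolding Sfam_def by blast
  define K where "K = {W. W \<subseteq> V \<and> card W = m}"
  define fibre where "fibre W = {S\<in>Sfam V E s m b. component_roots E S = W}" for W
  have finK: "finite K" unfolding K_def using finV by simp
  have cover: "Sfam V E s m b = \<Union>(fibre ` K)"
  proof (intro equalityI subsetI)
    fix S assume S: "S \<in> Sfam V E s m b"
    hence "component_roots E S \<in> K"
      using component_roots_subset[OF finS[OF S]] card_component_roots[OF G finS[OF S]]
      unfolding K_def Sfam_def by auto
    thus "S \<in> \<Union>(fibre ` K)" unfolding fibre_def using S by auto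
  qed (auto simp: fibre_def)
  have fibre_le: "real (card (fibre W)) * (p ^ s * q ^ b) \<le> 1" for W
  proof -
    have "real (card (fibre W)) * (p ^ s * q ^ b)
        \<le> (\<Sum>S\<in>fibre W. p ^ card S * q ^ card (boundary V E S))"
    proof (rule sum_bounded_below)
      fix S assume "S \<in> fibre W"
      hence S: "S \<in> Sfam V E s m b" unfolding fibre_def by simp
      hence "card S = s" "card (boundary V E S) \<le> b"
        using card_boundary_le[OF finS[OF S]] unfolding Sfam_def by auto
      thus "p ^ s * q ^ b \<le> p ^ card S * q ^ card (boundary V E S)"
        using assms by (simp add: power_decreasing mult_left_mono)
    qed
    also have "\<dots> \<le> 1"
    proof (rule sum_disjoint_cylinders_le_1[where A = "\<lambda>S. S" and B = "boundary V E"])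
      show "finite (fibre W)"
        by (rule finite_subset[of _ "Pow V"]) (auto simp: fibre_def Sfam_def finV)
      show "S \<subseteq> V \<and> boundary V E S \<subseteq> V \<and> S \<inter> boundary V E S = {}" if "S \<in> fibre W" for S
        using that boundary_subset boundary_disjoint[OF G] unfolding fibre_def Sfam_def by auto
      show "S = S'" if "S \<in> fibre W" "S' \<in> fibre W" "S \<subseteq> R" "R \<inter> boundary V E S = {}"
        "S' \<subseteq> R" "R \<inter> boundary V E S' = {}" for S S' R
      proof -
        have "finite S" "finite S'" "component_roots E S = component_roots E S'"
          using that(1,2) finS unfolding fibre_def by auto
        thus ?thesis
          using reach_from_component_roots[OF G _ that(3,4)] reach_from_component_roots[OF G _ that(5,6)]
          by simp
      qed
    qed (use finV assms in auto)
    finally show ?thesis .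
  qed
  have "card (Sfam V E s m b) \<le> (\<Sum>W\<in>K. card (fibre W))"
    unfolding cover by (rule card_UN_le[OF finK])
  hence "real (card (Sfam V E s m b)) * (p ^ s * q ^ b) \<le> (\<Sum>W\<in>K. real (card (fibre W)) * (p ^ s * q ^ b))"
    using assms by (simp add: sum_distrib_right[symmetric] mult_right_mono flip: of_nat_sum)
  also have "\<dots> \<le> (\<Sum>W\<in>K. 1)" by (rule sum_mono) (rule fibre_le)
  also have "\<dots> = real (card V choose m)" unfolding K_def using n_subsets[OF finV] by simp
  finally show ?thesis .
qed

lemma card_pairs_of_le:
  assumes "finite S"
  shows "finite (pairs_of S)" "card (pairs_of S) \<le> card S ^ 2"
proof -
  have sub: "pairs_of S \<subseteq> (\<lambda>(u, v). {u, v}) ` (S \<times> S)" unfolding pairs_of_def by auto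
  thus "finite (pairs_of S)" using assms finite_subset by blast
  have "card (pairs_of S) \<le> card ((\<lambda>(u, v). {u, v}) ` (S \<times> S))"
    using sub assms by (intro card_mono) auto
  also have "\<dots> \<le> card (S \<times> S)" by (rule card_image_le) (use assms in auto)
  finally show "card (pairs_of S) \<le> card S ^ 2" by (simp add: card_cartesian_product power2_eq_square)
qed

lemma card_Splus_le:
  assumes "finite V"
  shows "card (Splus V E s m b) \<le> card (Sfam V E s m b) * (s ^ 2 choose (m - 1))"
proof -
  define Fs where "Fs S = {F. F \<subseteq> pairs_of S \<and> card F = m - 1}" for S
  have finSf: "finite (Sfam V E s m b)"
    by (rule finite_subset[of _ "Pow V"]) (auto simp: Sfam_def assms)
  have pairs: "finite (pairs_of S)" "card (pairs_of S) \<le> s ^ 2" if "S \<in> Sfam V E s m b" for S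
    using that card_pairs_of_le[of S] assms finite_subset unfolding Sfam_def by blast+
  have card_Fs: "card (Fs S) \<le> s ^ 2 choose (m - 1)" if "S \<in> Sfam V E s m b" for S
    unfolding Fs_def n_subsets[OF pairs(1)[OF that]] using binomial_right_mono pairs(2)[OF that] .
  have "Splus V E s m b \<subseteq> Sigma (Sfam V E s m b) Fs" unfolding Splus_def Fs_def by auto
  hence "card (Splus V E s m b) \<le> card (Sigma (Sfam V E s m b) Fs)"
    by (rule card_mono[rotated]) (use finSf pairs in \<open>auto simp: Fs_def\<close>)
  also have "\<dots> = (\<Sum>S\<in>Sfam V E s m b. card (Fs S))"
    using finSf pairs by (intro card_SigmaI) (auto simp: Fs_def)
  also have "\<dots> \<le> card (Sfam V E s m b) * (s ^ 2 choose (m - 1))"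
    using sum_mono[OF card_Fs] by simp
  finally show ?thesis .
qed

lemma power_div_fact_le_exp:
  fixes x :: real
  assumes "0 \<le> x"
  shows "x ^ k / fact k \<le> exp x"
proof -
  obtain t where t: "exp x = (\<Sum>j<Suc k. x ^ j / fact j) + exp t / fact (Suc k) * x ^ Suc k"
    using Maclaurin_exp_le[of x "Suc k"] by blast
  have "x ^ k / fact k \<le> (\<Sum>j<Suc k. x ^ j / fact j)"
    by (rule member_le_sum) (use assms in auto)
  moreover have "0 \<le> exp t / fact (Suc k) * x ^ Suc k" using assms by simp
  ultimately show ?thesis using t by linarith
qed

lemma binomial_le_power_div_fact: "real (n choose k) \<le> real n ^ k / fact k"
proof -
  have "real (n choose k) * fact k \<le> real n ^ k"
    using binomial_fact_pow[of n k] by (metis of_nat_fact of_nat_le_iff of_nat_mult of_nat_power)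
  thus ?thesis by (simp add: field_simps)
qed

lemma power_div_fact_le_exp_div_power:
  fixes d :: real
  assumes "0 < d"
  shows "real s ^ k / fact k \<le> exp (d * s) / d ^ k"
  using power_div_fact_le_exp[of "d * s" k] assms
  by (simp add: power_mult_distrib field_simps)

text \<open>With \<open>k = m - 1\<close>: \<open>(n choose m) (s\<^sup>2 choose k) \<le> n\<^sup>m (s\<^sup>k / k!)\<^sup>2\<close>, and each factor
  \<open>s\<^sup>k / k!\<close> costs only \<open>exp (\<delta> s) / \<delta>\<^sup>k\<close>.\<close>

lemma binomials_le_exp:
  fixes d :: real
  assumes "0 < d" "0 < m"
  shows "real (n choose m) * real (s ^ 2 choose (m - 1)) * d ^ (2 * (m - 1))
    \<le> real n ^ m * exp (2 * d * s)"
proof -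
  define T where "T = real s ^ (m - 1) / fact (m - 1)"
  have "real (n choose m) \<le> real n ^ m / fact m" by (rule binomial_le_power_div_fact)
  also have "\<dots> \<le> real n ^ m / fact (m - 1)" by (rule divide_left_mono) (auto intro: fact_mono)
  finally have n_choose: "real (n choose m) \<le> real n ^ m / fact (m - 1)" .
  have "real (s ^ 2 choose (m - 1)) \<le> real (s ^ 2) ^ (m - 1) / fact (m - 1)"
    by (rule binomial_le_power_div_fact)
  also have "\<dots> = real s ^ (m - 1) * T" unfolding T_def by (simp add: power2_eq_square power_mult_distrib)
  finally have s_choose: "real (s ^ 2 choose (m - 1)) \<le> real s ^ (m - 1) * T" .
  have "T * d ^ (m - 1) \<le> exp (d * s)"
    using power_div_fact_le_exp_div_power[OF assms(1)] assms(1) by (simp add: T_def field_simps)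
  hence T_sq: "(T * d ^ (m - 1)) * (T * d ^ (m - 1)) \<le> exp (d * s) * exp (d * s)"
    using assms(1) by (intro mult_mono) (auto simp: T_def)
  have "real (n choose m) * real (s ^ 2 choose (m - 1)) \<le> real n ^ m / fact (m - 1) * (real s ^ (m - 1) * T)"
    using n_choose s_choose by (intro mult_mono) auto
  also have "\<dots> = real n ^ m * T * T" by (simp add: T_def)
  finally have "real (n choose m) * real (s ^ 2 choose (m - 1)) * d ^ (2 * (m - 1))
      \<le> real n ^ m * T * T * d ^ (2 * (m - 1))"
    by (rule mult_right_mono) (use assms(1) in simp)
  also have "\<dots> = real n ^ m * ((T * d ^ (m - 1)) * (T * d ^ (m - 1)))"
    by (simp add: mult_2 power_add)
  also have "\<dots> \<le> real n ^ m * (exp (d * s) * exp (d * s))"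
    by (rule mult_left_mono[OF T_sq]) simp
  also have "exp (d * s) * exp (d * s) = exp (2 * d * s)"
    by (simp flip: exp_add)
  finally show ?thesis .
qed

lemma exp_neg_le_one_minus:
  fixes d :: real
  assumes "0 \<le> d" "d \<le> 1/2"
  shows "exp (- 2 * d) \<le> 1 - d"
proof -
  have "- d - 2 * d\<^sup>2 \<le> ln (1 - d)" using assms by (intro ln_one_minus_pos_lower_bound) auto
  moreover have "2 * d\<^sup>2 \<le> d" using mult_right_mono[of "2 * d" 1 d] assms by (simp add: power2_eq_square)
  ultimately have "- 2 * d \<le> ln (1 - d)" by linarith
  thus ?thesis using assms by (simp add: ln_ge_iff)
qed

lemma ln_inverse_ge_half:
  fixes d :: real
  assumes "0 < d" "d \<le> 1/2"
  shows "1/2 \<le> ln (1 / d)"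
  using ln_one_minus_pos_upper_bound[of "1 - d"] assms by (simp add: ln_div)

text \<open>Since \<open>m \<le> b\<close>, the power \<open>\<delta>\<^bsup>b + 2(m-1)\<^esup>\<close> is at least \<open>\<delta>\<^bsup>3b\<^esup> \<ge> exp (-3 \<delta> s ln (1/\<delta>))\<close>.\<close>

lemma exp_le_weight:
  fixes d :: real
  assumes "0 < d" "d \<le> 1/2" "m \<le> b" "real b \<le> d * s"
  shows "exp (2 * d * s) \<le> exp (11 * d * ln (1 / d) * s) * ((1 - d) ^ s * d ^ (b + 2 * (m - 1)))"
proof -
  define L where "L = ln (1 / d)"
  have L: "1/2 \<le> L" unfolding L_def using ln_inverse_ge_half[OF assms(1,2)] .
  have "exp (- 2 * d * s) = exp (- 2 * d) ^ s" by (simp flip: exp_of_nat_mult)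
  also have "\<dots> \<le> (1 - d) ^ s" using exp_neg_le_one_minus assms by (simp add: power_mono)
  finally have weight_s: "exp (- 2 * d * s) \<le> (1 - d) ^ s" .
  have "exp (- 3 * d * s * L) \<le> exp (- 3 * b * L)"
    using assms(4) L by (simp add: mult_right_mono)
  also have "\<dots> = exp (real (3 * b) * ln d)" using assms(1) by (simp add: L_def ln_div)
  also have "\<dots> = d ^ (3 * b)" by (simp only: exp_of_nat_mult exp_ln[OF assms(1)])
  also have "\<dots> \<le> d ^ (b + 2 * (m - 1))" using assms by (intro power_decreasing) auto
  finally have weight_b: "exp (- 3 * d * s * L) \<le> d ^ (b + 2 * (m - 1))" .
  have "exp (2 * d * s) = exp (11 * d * L * s) * (exp (- 2 * d * s) * exp (- 3 * d * s * L)) *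
      exp (4 * d * s - 8 * d * s * L)"
    by (simp flip: exp_add)
  also have "\<dots> \<le> exp (11 * d * L * s) * ((1 - d) ^ s * d ^ (b + 2 * (m - 1))) * 1"
  proof (intro mult_mono mult_left_mono)
    have "4 * d * s * 1 \<le> 4 * d * s * (2 * L)" using L assms(1) by (intro mult_left_mono) auto
    thus "exp (4 * d * s - 8 * d * s * L) \<le> 1" by simp
  qed (use weight_s weight_b assms(1,2) in auto)
  finally show ?thesis by (simp add: L_def)
qed

theorem mainTheorem12:
  "\<exists>C::real. \<forall>(V::nat set) E n (\<delta>::real) (s::nat) (m::nat) (b::nat).
     simple_graph V E \<and> card V = n \<and> 0 < \<delta> \<and> \<delta> \<le> 1/2 \<and>
     0 < s \<and> 0 < m \<and> 0 < b \<and> m \<le> b \<and> real b \<le> \<delta> * real s \<longrightarrow>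
     real (card (Splus V E s m b)) \<le> real n ^ m * exp (C * \<delta> * ln (1 / \<delta>) * real s)"
proof (intro exI[of _ 11] allI impI, elim conjE)
  fix V E n s m b and d :: real
  assume G: "simple_graph V E" and n: "card V = n" and d: "0 < d" "d \<le> 1/2"
    and "0 < s" and m: "0 < m" and "0 < b" and mb: "m \<le> b" and bs: "real b \<le> d * real s"
  define P where "P = real (card (Splus V E s m b))"
  define N where "N = real (card (Sfam V E s m b))"
  define w where "w = (1 - d) ^ s * d ^ b"
  have "w > 0" unfolding w_def using d by simp
  have "N * w \<le> real (n choose m)"
    using card_Sfam_weighted_le[OF G, of "1 - d" d s m b] d n by (simp add: N_def w_def)
  have "P \<le> N * real (s ^ 2 choose (m - 1))"
    using card_Splus_le[of V E s m b] G unfolding P_def N_def simple_graph_def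
    by (simp flip: of_nat_mult)
  hence "P * w \<le> N * w * real (s ^ 2 choose (m - 1))"
    using \<open>w > 0\<close> by (simp add: mult_right_mono mult_ac)
  also have "\<dots> \<le> real (n choose m) * real (s ^ 2 choose (m - 1))"
    by (rule mult_right_mono[OF \<open>N * w \<le> _\<close>]) simp
  finally have "P * (w * d ^ (2 * (m - 1)))
      \<le> real (n choose m) * real (s ^ 2 choose (m - 1)) * d ^ (2 * (m - 1))"
    using d by (simp add: mult_right_mono flip: mult.assoc)
  also have "\<dots> \<le> real n ^ m * exp (2 * d * s)" by (rule binomials_le_exp[OF d(1) m])
  also have "\<dots> \<le> real n ^ m * exp (11 * d * ln (1 / d) * s) * (w * d ^ (2 * (m - 1)))"
    using exp_le_weight[OF d mb bs] by (simp add: w_def power_add mult_left_mono mult.assoc)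
  finally show "P \<le> real n ^ m * exp (11 * d * ln (1 / d) * real s)"
    using \<open>w > 0\<close> d by simp
qed

end
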